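(* Let $F$ be an $m\times n$ binary matrix. Suppose that, after permuting rows and columns, $F = \left[\begin{array}{ll} A & B\end{array}\right]$ where $A$ is of order $m\times(n-b)$ and $B = O$ is the $m\times b$ zero matrix. Then: (a) if $w(F) = m+b$, then $v(F) = v(A) = \min(m, n-b)$; (b) if $w(A) > \max(m, n-b)$, then $w(F) > m+b$; (c) if $w(F) = m+b$, then $w(A) \leq \max(m, n-b)$.
   Context: A binary matrix is a matrix with entries $0$ or $1$. Some ones of a binary matrix are independent if no two lie in the same row or the same column; $v(F)$ is the maximum number of independent ones of $F$. $w(F)$ is the maximum of $a+b'$ over all $a\times b'$ submatrices of $F$ (formed by a set of $a$ rows and a set of $b'$ columns) all of whose entries are zero; if $F$ has no zero entry, $w(F)=0$. Both $v$ and $w$ are invariant under permutations of rows and columns. *)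

theory Defs
  imports "HOL-Combinatorics.Permutations"
begin

text \<open>An m x n matrix is a function nat => nat => nat, considered on rows {..<m}
  and columns {..<n}. It is binary if all entries there are 0 or 1.\<close>

definition binary_matrix :: "nat \<Rightarrow> nat \<Rightarrow> (nat \<Rightarrow> nat \<Rightarrow> nat) \<Rightarrow> bool" where
  "binary_matrix m n F \<longleftrightarrow> (\<forall>i<m. \<forall>j<n. F i j = 0 \<or> F i j = 1)"

definition indep_ones :: "nat \<Rightarrow> nat \<Rightarrow> (nat \<Rightarrow> nat \<Rightarrow> nat) \<Rightarrow> (nat \<times> nat) set \<Rightarrow> bool" where
  "indep_ones m n F S \<longleftrightarrow> S \<subseteq> {..<m} \<times> {..<n} \<and> (\<forall>(i,j)\<in>S. F i j = 1)
     \<and> inj_on fst S \<and> inj_on snd S"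

definition v :: "nat \<Rightarrow> nat \<Rightarrow> (nat \<Rightarrow> nat \<Rightarrow> nat) \<Rightarrow> nat" where
  "v m n F = Max {card S | S. indep_ones m n F S}"

definition zero_submatrix :: "nat \<Rightarrow> nat \<Rightarrow> (nat \<Rightarrow> nat \<Rightarrow> nat) \<Rightarrow> nat set \<Rightarrow> nat set \<Rightarrow> bool" where
  "zero_submatrix m n F I J \<longleftrightarrow> I \<subseteq> {..<m} \<and> J \<subseteq> {..<n} \<and> I \<noteq> {} \<and> J \<noteq> {}
     \<and> (\<forall>i\<in>I. \<forall>j\<in>J. F i j = 0)"

definition w :: "nat \<Rightarrow> nat \<Rightarrow> (nat \<Rightarrow> nat \<Rightarrow> nat) \<Rightarrow> nat" where
  "w m n F = Max ({card I + card J | I J. zero_submatrix m n F I J} \<union> {0})"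

end

theory Submission
  imports Defs
begin

text \<open>A zero submatrix \<open>I \<times> J\<close> of \<open>A\<close>, extended by the \<open>b\<close> zero columns of \<open>B\<close>, is a zero
  submatrix of \<open>F\<close> of size \<open>|I| + |J| + b\<close>. So \<open>w(F) = m + b\<close> forces \<open>w(A) \<le> m\<close>, which gives
  (b) and (c). By Hall's marriage theorem, \<open>w(A) \<le> max(m, n - b)\<close> yields \<open>min(m, n - b)\<close>
  independent ones of \<open>A\<close>; and since \<open>B\<close> contains no ones, \<open>v(F) = v(A)\<close>.\<close>

definition hall_condition :: "'a set \<Rightarrow> ('a \<Rightarrow> 'b set) \<Rightarrow> bool" where
  "hall_condition I S \<longleftrightarrow> (\<forall>K\<subseteq>I. card K \<le> card (\<Union>(S ` K)))"

lemma hall_condition_subset: "hall_condition I S \<Longrightarrow> K \<subseteq> I \<Longrightarrow> hall_condition K S"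
  unfolding hall_condition_def by blast

lemma inj_on_if_Un:
  assumes "inj_on g K" "g ` K \<subseteq> U" "inj_on h L" "h ` L \<inter> U = {}"
  shows "inj_on (\<lambda>i. if i \<in> K then g i else h i) (K \<union> L)"
proof (rule inj_onI)
  fix x y assume "x \<in> K \<union> L" "y \<in> K \<union> L"
    and eq: "(if x \<in> K then g x else h x) = (if y \<in> K then g y else h y)"
  then consider "x \<in> K" "y \<in> K" | "x \<in> K" "y \<in> L" "y \<notin> K" | "x \<in> L" "x \<notin> K" "y \<in> K"
    | "x \<in> L" "y \<in> L" "x \<notin> K" "y \<notin> K"
    by blast
  then show "x = y"
  proof cases
    case 1 with eq show ?thesis using inj_onD[OF assms(1)] by simp
  next
    case 2 with eq show ?thesis using assms(2,4) by (force simp: disjoint_iff image_subset_iff)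
  next
    case 3 with eq show ?thesis using assms(2,4) by (force simp: disjoint_iff image_subset_iff)
  next
    case 4 with eq show ?thesis using inj_onD[OF assms(3)] by simp
  qed
qed

lemma hall_condition_remove_critical:
  assumes hall: "hall_condition I S" and "finite I" "\<forall>i\<in>I. finite (S i)"
    and "K \<subseteq> I" and critical: "card (\<Union>(S ` K)) \<le> card K"
  shows "hall_condition (I - K) (\<lambda>i. S i - \<Union>(S ` K))"
  unfolding hall_condition_def
proof (intro allI impI)
  fix L assume L: "L \<subseteq> I - K"
  have fin: "finite L" "finite K"
    using assms L by (auto intro: finite_subset)
  have fin_UN: "finite (\<Union>(S ` (L \<union> K)))"
    using fin assms L by (intro finite_UN_I) auto
  have "card L + card K = card (L \<union> K)"
    using fin L by (subst card_Un_disjoint) auto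
  also have "\<dots> \<le> card (\<Union>(S ` (L \<union> K)))"
    using hall[unfolded hall_condition_def, rule_format, of "L \<union> K"] L \<open>K \<subseteq> I\<close> by blast
  also have "\<dots> = card (\<Union>(S ` (L \<union> K)) - \<Union>(S ` K)) + card (\<Union>(S ` K))"
    using card_Diff_subset[OF finite_subset[OF _ fin_UN], of "\<Union>(S ` K)"]
      card_mono[OF fin_UN, of "\<Union>(S ` K)"] by force
  also have "\<Union>(S ` (L \<union> K)) - \<Union>(S ` K) = \<Union>((\<lambda>i. S i - \<Union>(S ` K)) ` L)"
    by auto
  finally show "card L \<le> card (\<Union>((\<lambda>i. S i - \<Union>(S ` K)) ` L))"
    using critical by linarith
qed

lemma hall_condition_remove_surplus:
  assumes "finite I" "\<forall>i\<in>I. finite (S i)" "i\<^sub>0 \<in> I"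
    and surplus: "\<And>K. K \<subset> I \<Longrightarrow> K \<noteq> {} \<Longrightarrow> card K < card (\<Union>(S ` K))"
  shows "hall_condition (I - {i\<^sub>0}) (\<lambda>i. S i - {x})"
  unfolding hall_condition_def
proof (intro allI impI)
  fix L assume L: "L \<subseteq> I - {i\<^sub>0}"
  show "card L \<le> card (\<Union>((\<lambda>i. S i - {x}) ` L))"
  proof (cases "L = {}")
    case False
    have "finite (\<Union>(S ` L))"
      using assms L by (intro finite_UN_I) (auto intro: finite_subset)
    moreover have "card L < card (\<Union>(S ` L))"
      using surplus[OF _ False] L \<open>i\<^sub>0 \<in> I\<close> by blast
    moreover have "\<Union>((\<lambda>i. S i - {x}) ` L) = \<Union>(S ` L) - {x}"
      by auto
    ultimately show ?thesis
      by (auto simp: card_Diff_singleton_if)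
  qed simp
qed

theorem hall_marriage:
  assumes "finite I" "\<forall>i\<in>I. finite (S i)" "hall_condition I S"
  shows "\<exists>f. inj_on f I \<and> (\<forall>i\<in>I. f i \<in> S i)"
  using assms
proof (induction "card I" arbitrary: I S rule: less_induct)
  case less
  note fin = less.prems(1) and finS = less.prems(2) and hall = less.prems(3)
  consider "I = {}"
    | (critical) K where "K \<subset> I" "K \<noteq> {}" "card (\<Union>(S ` K)) \<le> card K"
    | (surplus) "I \<noteq> {}" "\<And>K. K \<subset> I \<Longrightarrow> K \<noteq> {} \<Longrightarrow> card K < card (\<Union>(S ` K))"
    by (meson not_le)
  then show ?case
  proof cases
    case critical
    define U where "U = \<Union>(S ` K)"
    have "finite K"
      using critical(1) fin by (auto intro: finite_subset)
    have "card K < card I"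
      using critical(1) fin by (rule psubset_card_mono[rotated])
    have "card (I - K) < card I"
    proof -
      have "card K > 0"
        using critical(2) \<open>finite K\<close> by (simp add: card_gt_0_iff)
      then show ?thesis
        using critical(1) \<open>finite K\<close> \<open>card K < card I\<close> by (simp add: card_Diff_subset psubset_imp_subset)
    qed
    have "\<exists>g. inj_on g K \<and> (\<forall>i\<in>K. g i \<in> S i)"
      using critical(1) finS
      by (intro less.hyps[of K S] \<open>card K < card I\<close> \<open>finite K\<close> hall_condition_subset[OF hall]) auto
    then obtain g where g: "inj_on g K" "\<forall>i\<in>K. g i \<in> S i"
      by blast
    have "\<exists>h. inj_on h (I - K) \<and> (\<forall>i\<in>I - K. h i \<in> S i - U)"
      using critical finS fin unfolding U_def
      by (intro less.hyps[of "I - K" "\<lambda>i. S i - \<Union>(S ` K)"] \<open>card (I - K) < card I\<close>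
          hall_condition_remove_critical[OF hall fin finS]) auto
    then obtain h where h: "inj_on h (I - K)" "\<forall>i\<in>I - K. h i \<in> S i - U"
      by blast
    have "inj_on (\<lambda>i. if i \<in> K then g i else h i) (K \<union> (I - K))"
      by (rule inj_on_if_Un[OF g(1) _ h(1), where U = U]) (use g(2) h(2) in \<open>auto simp: U_def\<close>)
    then show ?thesis
      using critical g(2) h(2) by (intro exI[of _ "\<lambda>i. if i \<in> K then g i else h i"])
        (auto simp: Un_absorb1 psubset_imp_subset)
  next
    case surplus
    then obtain i\<^sub>0 where "i\<^sub>0 \<in> I" by blast
    then have "card {i\<^sub>0} \<le> card (S i\<^sub>0)"
      using hall[unfolded hall_condition_def, rule_format, of "{i\<^sub>0}"] by simp
    then obtain x where x: "x \<in> S i\<^sub>0"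
      by fastforce
    have "card (I - {i\<^sub>0}) < card I"
      using fin \<open>i\<^sub>0 \<in> I\<close> by (rule card_Diff1_less)
    then obtain h where h: "inj_on h (I - {i\<^sub>0})" "\<forall>i\<in>I - {i\<^sub>0}. h i \<in> S i - {x}"
      using less.hyps[of "I - {i\<^sub>0}" "\<lambda>i. S i - {x}"] fin finS
        hall_condition_remove_surplus[OF fin finS \<open>i\<^sub>0 \<in> I\<close> surplus(2)]
      by blast
    have "inj_on (\<lambda>i. if i \<in> {i\<^sub>0} then x else h i) ({i\<^sub>0} \<union> (I - {i\<^sub>0}))"
      by (rule inj_on_if_Un[OF _ _ h(1), where U = "{x}"]) (use h(2) in auto)
    then show ?thesis
      using \<open>i\<^sub>0 \<in> I\<close> x h(2)
      by (intro exI[of _ "\<lambda>i. if i \<in> {i\<^sub>0} then x else h i"]) (auto simp: insert_absorb)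
  qed auto
qed

lemma indep_ones_finite_card_le:
  assumes "indep_ones m n F S"
  shows "finite S" "card S \<le> m" "card S \<le> n"
proof -
  have sub: "S \<subseteq> {..<m} \<times> {..<n}" and "inj_on fst S" "inj_on snd S"
    using assms unfolding indep_ones_def by auto
  show "finite S"
    using sub by (rule finite_subset) simp
  have "card S = card (fst ` S)"
    using \<open>inj_on fst S\<close> by (simp add: card_image)
  also have "\<dots> \<le> card {..<m}"
    using sub by (intro card_mono) auto
  finally show "card S \<le> m" by simp
  have "card S = card (snd ` S)"
    using \<open>inj_on snd S\<close> by (simp add: card_image)
  also have "\<dots> \<le> card {..<n}"
    using sub by (intro card_mono) auto
  finally show "card S \<le> n" by simp
qed

lemma finite_card_indep_ones: "finite {card S | S. indep_ones m n F S}"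
  by (rule finite_subset[of _ "{..m}"]) (auto dest: indep_ones_finite_card_le)

lemma card_le_v: "indep_ones m n F S \<Longrightarrow> card S \<le> v m n F"
  unfolding v_def by (rule Max_ge[OF finite_card_indep_ones]) auto

lemma v_le:
  assumes "\<And>S. indep_ones m n F S \<Longrightarrow> card S \<le> k"
  shows "v m n F \<le> k"
proof -
  have "indep_ones m n F {}"
    unfolding indep_ones_def by simp
  then show ?thesis
    unfolding v_def using assms by (subst Max_le_iff[OF finite_card_indep_ones]) auto
qed

lemma v_le_min: "v m n F \<le> min m n"
  by (rule v_le) (simp add: indep_ones_finite_card_le)

lemma finite_card_zero_submatrix:
  "finite ({card I + card J | I J. zero_submatrix m n F I J} \<union> {0})"
proof -
  have "card I + card J \<le> m + n" if "zero_submatrix m n F I J" for I J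
    using that card_mono[of "{..<m}" I] card_mono[of "{..<n}" J]
    unfolding zero_submatrix_def by fastforce
  then have "{card I + card J | I J. zero_submatrix m n F I J} \<subseteq> {..m + n}"
    by auto
  then show ?thesis
    by (simp add: finite_subset)
qed

lemma card_le_w: "zero_submatrix m n F I J \<Longrightarrow> card I + card J \<le> w m n F"
  unfolding w_def by (rule Max_ge[OF finite_card_zero_submatrix]) auto

lemma w_le:
  assumes "\<And>I J. zero_submatrix m n F I J \<Longrightarrow> card I + card J \<le> k"
  shows "w m n F \<le> k"
  unfolding w_def using assms by (subst Max_le_iff[OF finite_card_zero_submatrix]) auto

lemma indep_ones_transpose:
  "indep_ones m n F S \<Longrightarrow> indep_ones n m (\<lambda>i j. F j i) (prod.swap ` S)"
  unfolding indep_ones_def by (auto simp: inj_on_def)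

lemma w_transpose_le: "w n m (\<lambda>i j. F j i) \<le> w m n F"
proof (rule w_le)
  fix J I assume "zero_submatrix n m (\<lambda>i j. F j i) J I"
  then have "zero_submatrix m n F I J"
    unfolding zero_submatrix_def by auto
  then show "card J + card I \<le> w m n F"
    using card_le_w by fastforce
qed

text \<open>Hall's theorem applied to the sets of columns in which each row has a one: a set \<open>K\<close>
  of rows violating Hall's condition leaves a zero submatrix \<open>K \<times> (columns outside N(K))\<close>
  that is too large.\<close>

lemma exists_indep_ones_saturating_rows:
  assumes bin: "binary_matrix m n A" and "m \<le> n" and w_le_n: "w m n A \<le> n"
  shows "\<exists>S. indep_ones m n A S \<and> card S = m"
proof -
  define R where "R i = {j. j < n \<and> A i j = 1}" for i
  have "hall_condition {..<m} R"
    unfolding hall_condition_def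
  proof (intro allI impI)
    fix K assume K: "K \<subseteq> {..<m}"
    define N where "N = \<Union>(R ` K)"
    have N: "N \<subseteq> {..<n}"
      unfolding N_def R_def by auto
    show "card K \<le> card (\<Union>(R ` K))"
    proof (cases "K = {} \<or> N = {..<n}")
      case True
      then show ?thesis
        using card_mono[OF _ K] \<open>m \<le> n\<close> unfolding N_def by auto
    next
      case False
      have "\<forall>i\<in>K. \<forall>j\<in>{..<n} - N. A i j = 0"
        using K bin unfolding binary_matrix_def N_def R_def by blast
      then have "zero_submatrix m n A K ({..<n} - N)"
        using K N False unfolding zero_submatrix_def by auto
      then have "card K + card ({..<n} - N) \<le> n"
        using card_le_w w_le_n le_trans by blast
      moreover have "card ({..<n} - N) = n - card N"
        using N by (simp add: card_Diff_subset finite_subset)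
      moreover have "card N \<le> n"
        using card_mono[OF _ N] by simp
      ultimately show ?thesis
        unfolding N_def by linarith
    qed
  qed
  then obtain f where f: "inj_on f {..<m}" "\<forall>i\<in>{..<m}. f i \<in> R i"
    using hall_marriage[of "{..<m}" R] unfolding R_def by auto
  define S where "S = (\<lambda>i. (i, f i)) ` {..<m}"
  have "inj_on snd S"
    using f(1) unfolding S_def inj_on_def by auto
  then have "indep_ones m n A S"
    using f(2) unfolding indep_ones_def S_def R_def by (auto simp: inj_on_def)
  moreover have "card S = m"
    unfolding S_def by (simp add: card_image inj_on_def)
  ultimately show ?thesis
    by blast
qed

lemma v_eq_min_if_w_le_max:
  assumes bin: "binary_matrix m n A" and "w m n A \<le> max m n"
  shows "v m n A = min m n"
proof (cases "m \<le> n")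
  case True
  then obtain S where "indep_ones m n A S" "card S = m"
    using exists_indep_ones_saturating_rows bin assms(2) by (metis max.absorb2)
  then show ?thesis
    using card_le_v[of m n A S] v_le_min[of m n A] True by simp
next
  case False
  have "binary_matrix n m (\<lambda>i j. A j i)"
    using bin unfolding binary_matrix_def by auto
  moreover have "w n m (\<lambda>i j. A j i) \<le> m"
    using w_transpose_le[of n m A] assms(2) False by simp
  ultimately obtain S where S: "indep_ones n m (\<lambda>i j. A j i) S" "card S = n"
    using exists_indep_ones_saturating_rows False by fastforce
  have "indep_ones m n A (prod.swap ` S)"
    using indep_ones_transpose[OF S(1)] by simp
  moreover have "card (prod.swap ` S) = n"
    using S(2) by (simp add: card_image)
  ultimately show ?thesis
    using card_le_v[of m n A] v_le_min[of m n A] False by fastforce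
qed

lemma indep_ones_permute:
  assumes \<sigma>: "\<sigma> permutes {..<m}" and \<tau>: "\<tau> permutes {..<n}"
    and S: "indep_ones m n (\<lambda>i j. F (\<sigma> i) (\<tau> j)) S"
  shows "indep_ones m n F (map_prod \<sigma> \<tau> ` S)"
proof -
  have "inj_on (\<sigma> \<circ> fst) S" "inj_on (\<tau> \<circ> snd) S"
    using S permutes_inj[OF \<sigma>] permutes_inj[OF \<tau>] unfolding indep_ones_def
    by (auto intro: comp_inj_on inj_on_subset)
  then have "inj_on fst (map_prod \<sigma> \<tau> ` S)" "inj_on snd (map_prod \<sigma> \<tau> ` S)"
    by (auto intro: inj_on_imageI simp: comp_def)
  then show ?thesis
    using S permutes_in_image[OF \<sigma>] permutes_in_image[OF \<tau>] unfolding indep_ones_def by auto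
qed

lemma v_permute_le:
  assumes "\<sigma> permutes {..<m}" "\<tau> permutes {..<n}"
  shows "v m n (\<lambda>i j. F (\<sigma> i) (\<tau> j)) \<le> v m n F"
proof (rule v_le)
  fix S assume S: "indep_ones m n (\<lambda>i j. F (\<sigma> i) (\<tau> j)) S"
  have "inj (map_prod \<sigma> \<tau>)"
    using assms by (simp add: prod.inj_map permutes_inj)
  then have "card S = card (map_prod \<sigma> \<tau> ` S)"
    by (simp add: card_image inj_on_subset)
  also have "\<dots> \<le> v m n F"
    using card_le_v indep_ones_permute[OF assms S] by blast
  finally show "card S \<le> v m n F" .
qed

lemma v_permute:
  assumes \<sigma>: "\<sigma> permutes {..<m}" and \<tau>: "\<tau> permutes {..<n}"
  shows "v m n (\<lambda>i j. F (\<sigma> i) (\<tau> j)) = v m n F"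
proof (rule antisym)
  show "v m n (\<lambda>i j. F (\<sigma> i) (\<tau> j)) \<le> v m n F"
    using assms by (rule v_permute_le)
  have "v m n (\<lambda>i j. F (\<sigma> (inv \<sigma> i)) (\<tau> (inv \<tau> j))) \<le> v m n (\<lambda>i j. F (\<sigma> i) (\<tau> j))"
    using v_permute_le[OF permutes_inv[OF \<sigma>] permutes_inv[OF \<tau>]] .
  then show "v m n F \<le> v m n (\<lambda>i j. F (\<sigma> i) (\<tau> j))"
    by (simp add: permutes_inverses[OF \<sigma>] permutes_inverses[OF \<tau>])
qed

lemma w_permute_le:
  assumes \<sigma>: "\<sigma> permutes {..<m}" and \<tau>: "\<tau> permutes {..<n}"
  shows "w m n (\<lambda>i j. F (\<sigma> i) (\<tau> j)) \<le> w m n F"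
proof (rule w_le)
  fix I J assume IJ: "zero_submatrix m n (\<lambda>i j. F (\<sigma> i) (\<tau> j)) I J"
  then have "zero_submatrix m n F (\<sigma> ` I) (\<tau> ` J)"
    using permutes_in_image[OF \<sigma>] permutes_in_image[OF \<tau>] unfolding zero_submatrix_def by auto
  then have "card (\<sigma> ` I) + card (\<tau> ` J) \<le> w m n F"
    by (rule card_le_w)
  then show "card I + card J \<le> w m n F"
    using permutes_inj[OF \<sigma>] permutes_inj[OF \<tau>] by (simp add: card_image inj_on_subset)
qed

lemma v_zero_columns:
  assumes "n' \<le> n" and zero: "\<forall>i<m. \<forall>j. n' \<le> j \<and> j < n \<longrightarrow> G i j = 0"
  shows "v m n G = v m n' G"
proof (rule antisym)
  show "v m n G \<le> v m n' G"
  proof (rule v_le)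
    fix S assume S: "indep_ones m n G S"
    have "S \<subseteq> {..<m} \<times> {..<n'}"
    proof
      fix p assume "p \<in> S"
      then show "p \<in> {..<m} \<times> {..<n'}"
        using S zero unfolding indep_ones_def by (cases p) (force simp: not_less)
    qed
    then have "indep_ones m n' G S"
      using S unfolding indep_ones_def by blast
    then show "card S \<le> v m n' G"
      by (rule card_le_v)
  qed
  show "v m n' G \<le> v m n G"
    by (rule v_le, rule card_le_v) (use \<open>n' \<le> n\<close> in \<open>auto simp: indep_ones_def\<close>)
qed

lemma card_add_zero_columns_le_w:
  assumes "n' \<le> n" and zero: "\<forall>i<m. \<forall>j. n' \<le> j \<and> j < n \<longrightarrow> G i j = 0"
    and IJ: "zero_submatrix m n' G I J"
  shows "card I + card J + (n - n') \<le> w m n G"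
proof -
  have "zero_submatrix m n G I (J \<union> {n'..<n})"
    using IJ zero \<open>n' \<le> n\<close> unfolding zero_submatrix_def by (auto simp: subset_iff)
  then have "card I + card (J \<union> {n'..<n}) \<le> w m n G"
    by (rule card_le_w)
  moreover have "card (J \<union> {n'..<n}) = card J + (n - n')"
    using IJ unfolding zero_submatrix_def
    by (subst card_Un_disjoint) (auto intro: finite_subset)
  ultimately show ?thesis
    by simp
qed

theorem theorem39:
  fixes F :: "nat \<Rightarrow> nat \<Rightarrow> nat" and m n b :: nat
    and \<sigma> \<tau> :: "nat \<Rightarrow> nat"
  assumes bin: "binary_matrix m n F"
    and b_le: "b \<le> n"
    and \<sigma>: "\<sigma> permutes {..<m}"
    and \<tau>: "\<tau> permutes {..<n}"
    and B_zero: "\<forall>i<m. \<forall>j. n - b \<le> j \<and> j < n \<longrightarrow> F (\<sigma> i) (\<tau> j) = 0"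
  defines "A \<equiv> (\<lambda>i j. F (\<sigma> i) (\<tau> j))"
  shows "(w m n F = m + b \<longrightarrow> v m n F = v m (n - b) A \<and> v m (n - b) A = min m (n - b))
       \<and> (w m (n - b) A > max m (n - b) \<longrightarrow> w m n F > m + b)
       \<and> (w m n F = m + b \<longrightarrow> w m (n - b) A \<le> max m (n - b))"
proof -
  have A_zero: "\<forall>i<m. \<forall>j. n - b \<le> j \<and> j < n \<longrightarrow> A i j = 0"
    using B_zero unfolding A_def by blast
  have bin_A: "binary_matrix m (n - b) A"
    using bin permutes_in_image[OF \<sigma>] permutes_in_image[OF \<tau>]
    unfolding binary_matrix_def A_def by auto
  have v_F: "v m n F = v m (n - b) A"
    using v_permute[OF \<sigma> \<tau>, of F] v_zero_columns[OF _ A_zero] unfolding A_def by simp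
  have w_A: "w m (n - b) A \<le> m" if "w m n F \<le> m + b"
  proof (rule w_le)
    fix I J assume "zero_submatrix m (n - b) A I J"
    then have "card I + card J + b \<le> w m n A"
      using card_add_zero_columns_le_w[OF _ A_zero] b_le by fastforce
    then show "card I + card J \<le> m"
      using w_permute_le[OF \<sigma> \<tau>, of F] that unfolding A_def by linarith
  qed
  show ?thesis
    using v_F w_A v_eq_min_if_w_le_max[OF bin_A] by fastforce
qed

end
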